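(* Let $P,Q\subseteq M_{\mathbb R}$ be lattice polytopes such that $P+Q$ is a reflexive polytope with respect to some lattice point. Let $p\in P$ be a lattice point, $L:=\mathrm{lin}(P-p)$, and $\pi:M_{\mathbb R}\to M_{\mathbb R}/L$ the projection. Then $\pi(P+Q)$ is a reflexive polytope with respect to the lattice $\pi(M)$ (with respect to some lattice point).
   Context: $M\cong\mathbb Z^d$, $N$ its dual lattice. A lattice polytope $\Delta$ is reflexive with respect to a lattice point $m$ if $m$ lies in the interior of $\Delta$ and $\{y:\langle x,y\rangle\ge-1\ \forall x\in\Delta-m\}$ is a lattice polytope. (If $\dim P=\dim(P+Q)$ the image is a point, regarded as a $0$-dimensional reflexive polytope.) *)

theory Defs
  imports "HOL-Analysis.Analysis"
begin

text \<open>The lattice M = Z^d inside M_R = R^d.\<close>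
definition int_points :: "(real^'n) set" where
  "int_points = {x. \<forall>i. x $ i \<in> \<int>}"

definition msum :: "(real^'n) set \<Rightarrow> (real^'n) set \<Rightarrow> (real^'n) set" where
  "msum A B = {a + b | a b. a \<in> A \<and> b \<in> B}"

definition lattice_polytope_wrt :: "(real^'n) set \<Rightarrow> (real^'n) set \<Rightarrow> bool" where
  "lattice_polytope_wrt Lam D \<longleftrightarrow>
     (\<exists>S. finite S \<and> S \<noteq> {} \<and> S \<subseteq> Lam \<and> D = convex hull S)"

text \<open>Dual lattice of a lattice Lam spanning the linear subspace V, where the dual
  space of V is identified with V via the standard inner product.\<close>
definition dual_lattice :: "(real^'n) set \<Rightarrow> (real^'n) set \<Rightarrow> (real^'n) set" where
  "dual_lattice V Lam = {y \<in> V. \<forall>v\<in>Lam. v \<bullet> y \<in> \<int>}"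

definition polar_wrt :: "(real^'n) set \<Rightarrow> (real^'n) set \<Rightarrow> real^'n \<Rightarrow> (real^'n) set" where
  "polar_wrt V D m = {y \<in> V. \<forall>x\<in>D. (x - m) \<bullet> y \<ge> -1}"

definition reflexive_wrt ::
  "(real^'n) set \<Rightarrow> (real^'n) set \<Rightarrow> (real^'n) set \<Rightarrow> real^'n \<Rightarrow> bool" where
  "reflexive_wrt V Lam D m \<longleftrightarrow>
     lattice_polytope_wrt Lam D \<and> D \<subseteq> V \<and> m \<in> Lam \<and>
     (\<exists>e>0. ball m e \<inter> V \<subseteq> D) \<and>
     lattice_polytope_wrt (dual_lattice V Lam) (polar_wrt V D m)"

end

theory Submission
  imports Defs
begin

(* Let D be the polar of P + Q - m, the convex hull of a finite set S of dual lattice points, and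
   L = lin(P - p).  The adjoint of \<pi> identifies the polar of \<pi>(P + Q) - \<pi> m, taken inside
   range \<pi>, with the section D \<inter> L\<^sup>\<bottom>.  Every extreme point w \<noteq> 0 of this section is a vertex
   of D: if no point of P + Q is tight for w then w can be scaled beyond itself inside the
   section; if a + b is tight then, w being orthogonal to P - p, so is every point of P + b, and
   the face of D on which all of P + b is tight lies in L\<^sup>\<bottom> and contains w.  Hence the section
   is the convex hull of finitely many points of insert 0 S, which are dual lattice points. *)

lemma range_adjoint_eq_orthogonal_comp_ker:
  fixes f :: "'m::euclidean_space \<Rightarrow> 'n::euclidean_space"
  assumes "linear f"
  shows "range (adjoint f) = (f -` {0})\<^sup>\<bottom>"
  using assms by (simp add: ker_orthogonal_comp_adjoint orthogonal_comp_self
      adjoint_linear linear_subspace_image)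

lemma ker_adjoint_eq_orthogonal_comp_range:
  fixes f :: "'m::euclidean_space \<Rightarrow> 'n::euclidean_space"
  assumes "linear f"
  shows "adjoint f -` {0} = (range f)\<^sup>\<bottom>"
  using ker_orthogonal_comp_adjoint[OF adjoint_linear[OF assms]]
  by (simp add: adjoint_adjoint assms)

lemma adjoint_image_range:
  fixes f :: "'m::euclidean_space \<Rightarrow> 'n::euclidean_space"
  assumes f: "linear f"
  shows "adjoint f ` range f = (f -` {0})\<^sup>\<bottom>"
proof -
  have "adjoint f y \<in> adjoint f ` range f" for y
  proof -
    obtain r k where "y = r + k" "r \<in> range f" "k \<in> (range f)\<^sup>\<bottom>"
      using subspace_sum_orthogonal_comp[OF linear_subspace_image[OF f subspace_UNIV]]
      by (metis UNIV_I set_plus_elim)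
    then have "adjoint f y = adjoint f r"
      using ker_adjoint_eq_orthogonal_comp_range[OF f]
      by (auto simp: linear_add[OF adjoint_linear[OF f]])
    with \<open>r \<in> range f\<close> show ?thesis by blast
  qed
  then show ?thesis
    by (auto simp flip: range_adjoint_eq_orthogonal_comp_ker[OF f])
qed

lemma inj_on_adjoint_range:
  fixes f :: "'m::euclidean_space \<Rightarrow> 'n::euclidean_space"
  assumes f: "linear f"
  shows "inj_on (adjoint f) (range f)"
proof -
  have "r = 0" if "r \<in> range f" "adjoint f r = 0" for r
    using that orthogonal_Int_0[OF linear_subspace_image[OF f subspace_UNIV]]
      ker_adjoint_eq_orthogonal_comp_range[OF f] by blast
  then show ?thesis
    using linear_injective_on_subspace_0[OF adjoint_linear[OF f]
        linear_subspace_image[OF f subspace_UNIV]] by blast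
qed

lemma orthogonal_comp_span [simp]: "(span S)\<^sup>\<bottom> = S\<^sup>\<bottom>"
  by (auto simp: orthogonal_comp_def orthogonal_commute intro: orthogonal_to_span span_base)

lemma orthogonal_comp_differences:
  "{x - p | x. x \<in> P}\<^sup>\<bottom> = {u. \<forall>x\<in>P. (x - p) \<bullet> u = 0}"
  by (auto simp: orthogonal_comp_def orthogonal_def)

lemma compact_lattice_polytope: "lattice_polytope_wrt Lam D \<Longrightarrow> compact D"
  by (auto simp: lattice_polytope_wrt_def compact_convex_hull finite_imp_compact)

lemma lattice_polytope_wrt_linear_image:
  assumes "lattice_polytope_wrt Lam D" "linear f"
  shows "lattice_polytope_wrt (f ` Lam) (f ` D)"
  using assms convex_hull_linear_image[OF \<open>linear f\<close>]
  unfolding lattice_polytope_wrt_def by (metis finite_imageI image_is_empty image_mono)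

lemma linear_image_contains_ball_Int_range:
  fixes f :: "'a::euclidean_space \<Rightarrow> 'b::euclidean_space"
  assumes f: "linear f" and "e > 0" and ball: "ball m e \<subseteq> K"
  shows "\<exists>e'>0. ball (f m) e' \<inter> range f \<subseteq> f ` K"
proof -
  obtain h where "linear h" and h: "\<And>y. y \<in> range f \<Longrightarrow> f (h y) = y"
    using linear_exists_right_inverse_on[OF f subspace_UNIV] by auto
  obtain B where "B > 0" and B: "\<And>y. norm (h y) \<le> B * norm y"
    using linear_bounded_pos[OF \<open>linear h\<close>] by blast
  have "y \<in> f ` K" if y: "y \<in> ball (f m) (e / B)" "y \<in> range f" for y
  proof -
    have "y - f m \<in> range f"
      using y(2) by (metis f linear_diff rangeE rangeI)
    then have "f (m + h (y - f m)) = y"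
      by (simp add: h linear_add[OF f])
    moreover have "norm (h (y - f m)) < e"
      using B[of "y - f m"] y(1) \<open>B > 0\<close>
      by (simp add: dist_norm norm_minus_commute pos_less_divide_eq mult.commute)
    then have "m + h (y - f m) \<in> K"
      using ball by (auto simp: dist_norm)
    ultimately show ?thesis
      by (metis imageI)
  qed
  then show ?thesis
    using \<open>e > 0\<close> \<open>B > 0\<close> by (intro exI[of _ "e / B"]) auto
qed

lemma convex_polar_wrt: "convex V \<Longrightarrow> convex (polar_wrt V D m)"
proof -
  assume "convex V"
  moreover have "polar_wrt V D m = V \<inter> (\<Inter>x\<in>D. {y. (x - m) \<bullet> y \<ge> -1})"
    by (auto simp: polar_wrt_def)
  ultimately show ?thesis
    by (simp add: convex_INT convex_Int convex_halfspace_ge)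
qed

lemma polar_wrt_linear_image:
  assumes f: "linear f"
  shows "polar_wrt (range f) (f ` D) (f m) = {y \<in> range f. adjoint f y \<in> polar_wrt UNIV D m}"
proof -
  have "(f x - f m) \<bullet> y = (x - m) \<bullet> adjoint f y" for x y
    by (simp add: adjoint_works f flip: linear_diff[OF f])
  then show ?thesis
    by (auto simp: polar_wrt_def)
qed

lemma adjoint_image_polar_wrt_linear_image:
  assumes f: "linear f"
  shows "adjoint f ` polar_wrt (range f) (f ` D) (f m) = polar_wrt UNIV D m \<inter> (f -` {0})\<^sup>\<bottom>"
proof -
  have "adjoint f ` {y \<in> range f. adjoint f y \<in> polar_wrt UNIV D m} =
      adjoint f ` range f \<inter> polar_wrt UNIV D m"
    by blast
  then show ?thesis
    by (simp add: polar_wrt_linear_image[OF f] adjoint_image_range[OF f] Int_commute)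
qed

lemma dual_lattice_linear_image_adjoint:
  assumes "linear f" "y \<in> range f" "adjoint f y \<in> dual_lattice UNIV Lam"
  shows "y \<in> dual_lattice (range f) (f ` Lam)"
  using assms by (auto simp: dual_lattice_def adjoint_works)

lemma polar_wrt_scaled_mem:
  assumes "compact D" and gt: "\<forall>x\<in>D. (x - m) \<bullet> w > -1"
  shows "\<exists>c>1. c *\<^sub>R w \<in> polar_wrt UNIV D m"
proof (cases "D = {}")
  case True
  then show ?thesis
    by (intro exI[of _ 2]) (simp add: polar_wrt_def)
next
  case False
  have "continuous_on D (\<lambda>x. (x - m) \<bullet> w)"
    by (intro continuous_intros)
  then obtain x0 where "x0 \<in> D" and min: "\<And>x. x \<in> D \<Longrightarrow> (x0 - m) \<bullet> w \<le> (x - m) \<bullet> w"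
    using continuous_attains_inf[OF \<open>compact D\<close> False] by blast
  define \<mu> where "\<mu> = (x0 - m) \<bullet> w"
  have "\<mu> > -1"
    using gt \<open>x0 \<in> D\<close> by (simp add: \<mu>_def)
  define c where "c = (if \<mu> \<ge> 0 then 2 else -1 / \<mu>)"
  have "c > 1"
    using \<open>\<mu> > -1\<close> by (auto simp: c_def field_simps)
  moreover have "c * ((x - m) \<bullet> w) \<ge> -1" if "x \<in> D" for x
  proof -
    have "c * \<mu> \<ge> -1"
      using \<open>\<mu> > -1\<close> by (auto simp: c_def)
    also have "c * \<mu> \<le> c * ((x - m) \<bullet> w)"
      using min[OF that] \<open>c > 1\<close> by (simp add: \<mu>_def)
    finally show ?thesis .
  qed
  ultimately show ?thesis
    by (intro exI[of _ c]) (auto simp: polar_wrt_def)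
qed

lemma polar_wrt_tight_face:
  assumes "X \<subseteq> D" "X \<noteq> {}"
  shows "{u \<in> polar_wrt UNIV D m. \<forall>x\<in>X. (x - m) \<bullet> u = -1} face_of polar_wrt UNIV D m"
proof -
  let ?D = "polar_wrt UNIV D m"
  have eq: "{u \<in> ?D. \<forall>x\<in>X. (x - m) \<bullet> u = -1} = \<Inter> ((\<lambda>x. ?D \<inter> {u. (x - m) \<bullet> u = -1}) ` X)"
    using \<open>X \<noteq> {}\<close> by auto
  have "?D \<inter> {u. (x - m) \<bullet> u = -1} face_of ?D" if "x \<in> X" for x
    using that \<open>X \<subseteq> D\<close>
    by (intro face_of_Int_supporting_hyperplane_ge convex_polar_wrt) (auto simp: polar_wrt_def)
  then show ?thesis
    unfolding eq using \<open>X \<noteq> {}\<close> by (intro face_of_Inter) blast+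
qed

lemma extreme_point_of_polar_wrt_Int_orthogonal:
  fixes P Q :: "(real^'n) set" and m p :: "real^'n"
  defines "D \<equiv> polar_wrt UNIV (msum P Q) m"
    and "C \<equiv> polar_wrt UNIV (msum P Q) m \<inter> {u. \<forall>x\<in>P. (x - p) \<bullet> u = 0}"
  assumes "compact (msum P Q)" "p \<in> P" and w: "w extreme_point_of C"
  shows "w = 0 \<or> w extreme_point_of D"
proof -
  have C_eq: "C = D \<inter> {u. \<forall>x\<in>P. (x - p) \<bullet> u = 0}"
    by (simp add: C_def D_def)
  have "w \<in> C"
    using w by (simp add: C_eq extreme_point_of_def)
  show ?thesis
  proof (cases "\<forall>x\<in>msum P Q. (x - m) \<bullet> w > -1")
    case True
    then obtain c where "c > 1" "c *\<^sub>R w \<in> D"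
      using polar_wrt_scaled_mem[OF \<open>compact (msum P Q)\<close> True] by (auto simp: D_def)
    then have "c *\<^sub>R w \<in> C"
      using \<open>w \<in> C\<close> by (simp add: C_eq)
    moreover have "0 \<in> C"
      by (simp add: C_eq D_def polar_wrt_def)
    moreover have "w \<in> open_segment 0 (c *\<^sub>R w)" if "w \<noteq> 0"
      using that \<open>c > 1\<close> by (auto simp: in_segment intro!: exI[of _ "1/c"])
    ultimately show ?thesis
      using w by (auto simp: extreme_point_of_def)
  next
    case False
    then obtain a b where "a \<in> P" "b \<in> Q" and "(a + b - m) \<bullet> w \<le> -1"
      by (auto simp: msum_def not_less)
    then have tight: "(a + b - m) \<bullet> w = -1"
      using \<open>w \<in> C\<close> by (force simp: C_eq D_def polar_wrt_def msum_def)
    \<comment> \<open>On C the functional u \<mapsto> (x + b - m) \<bullet> u does not depend on x \<in> P, so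
      tightness at a + b spreads to all of P + b; the face cut out there lies inside C.\<close>
    define F where "F = {u \<in> D. \<forall>x\<in>(\<lambda>x. x + b) ` P. (x - m) \<bullet> u = -1}"
    have "F face_of D"
      unfolding F_def D_def using \<open>b \<in> Q\<close> \<open>p \<in> P\<close>
      by (intro polar_wrt_tight_face) (auto simp: msum_def)
    have "F \<subseteq> C"
    proof
      fix u assume "u \<in> F"
      then have "(x + b - m) \<bullet> u = (p + b - m) \<bullet> u" if "x \<in> P" for x
        using that \<open>p \<in> P\<close> by (simp add: F_def)
      then show "u \<in> C"
        using \<open>u \<in> F\<close> by (simp add: C_eq F_def inner_diff_left inner_add_left)
    qed
    have "w \<in> F"
    proof -
      have "(x - a) \<bullet> w = 0" if "x \<in> P" for x
        using \<open>w \<in> C\<close> that \<open>a \<in> P\<close> inner_diff_left[of "x - p" "a - p" w]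
        by (simp add: C_eq)
      then show ?thesis
        using \<open>w \<in> C\<close> tight by (auto simp: C_eq F_def inner_diff_left inner_add_left)
    qed
    then have "w extreme_point_of F"
      using w \<open>F \<subseteq> C\<close> by (auto simp: extreme_point_of_def)
    then show ?thesis
      using extreme_point_of_face[OF \<open>F face_of D\<close>] by blast
  qed
qed

lemma lattice_polytope_polar_wrt_linear_image:
  fixes P Q :: "(real^'n) set" and f :: "real^'n \<Rightarrow> real^'n"
  assumes "compact (msum P Q)" "p \<in> P"
    and "lattice_polytope_wrt (dual_lattice UNIV Lam) (polar_wrt UNIV (msum P Q) m)"
    and f: "linear f" and ker: "f -` {0} = span {x - p | x. x \<in> P}"
  shows "lattice_polytope_wrt (dual_lattice (range f) (f ` Lam))
           (polar_wrt (range f) (f ` msum P Q) (f m))"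
proof -
  define D where "D = polar_wrt UNIV (msum P Q) m"
  define C where "C = D \<inter> {u. \<forall>x\<in>P. (x - p) \<bullet> u = 0}"
  obtain S where "finite S" and S: "S \<subseteq> dual_lattice UNIV Lam" and D: "D = convex hull S"
    using assms(3) by (auto simp: lattice_polytope_wrt_def D_def)
  have C_ker: "C = D \<inter> (f -` {0})\<^sup>\<bottom>"
    by (simp add: C_def ker orthogonal_comp_differences)
  have "compact C"
    unfolding C_ker D using \<open>finite S\<close>
    by (intro compact_Int_closed closed_subspace subspace_orthogonal_comp
        compact_convex_hull finite_imp_compact)
  moreover have "convex C"
    unfolding C_ker D by (simp add: convex_Int subspace_imp_convex subspace_orthogonal_comp)
  ultimately have C_hull: "C = convex hull {w. w extreme_point_of C}"
    by (rule Krein_Milman_Minkowski)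
  have extreme: "{w. w extreme_point_of C} \<subseteq> insert 0 S"
  proof
    fix w assume "w \<in> {w. w extreme_point_of C}"
    then have "w = 0 \<or> w extreme_point_of convex hull S"
      using extreme_point_of_polar_wrt_Int_orthogonal[OF assms(1,2)]
      by (simp add: C_def D_def flip: D)
    then show "w \<in> insert 0 S"
      using extreme_point_of_convex_hull by blast
  qed
  obtain g where "linear g" and g: "\<And>y. y \<in> range f \<Longrightarrow> g (adjoint f y) = y"
    using linear_exists_left_inverse_on[OF adjoint_linear[OF f] _ inj_on_adjoint_range[OF f]]
      linear_subspace_image[OF f subspace_UNIV] by auto
  let ?D' = "polar_wrt (range f) (f ` msum P Q) (f m)"
  have "?D' = g ` adjoint f ` ?D'"
    using g by (force simp: polar_wrt_def image_image)
  also have "\<dots> = g ` C"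
    by (simp add: adjoint_image_polar_wrt_linear_image[OF f] C_ker D_def)
  finally have D': "?D' = convex hull (g ` {w. w extreme_point_of C})"
    by (metis C_hull convex_hull_linear_image[OF \<open>linear g\<close>])
  have "g w \<in> dual_lattice (range f) (f ` Lam)" if "w extreme_point_of C" for w
  proof -
    from that have "w \<in> C"
      by (simp add: extreme_point_of_def)
    then obtain y where "y \<in> ?D'" "w = adjoint f y"
      by (metis adjoint_image_polar_wrt_linear_image[OF f] C_ker D_def imageE)
    moreover have "insert 0 S \<subseteq> dual_lattice UNIV Lam"
      using S by (simp add: dual_lattice_def)
    then have "w \<in> dual_lattice UNIV Lam"
      using extreme that by blast
    ultimately show ?thesis
      using g dual_lattice_linear_image_adjoint[OF f] by (auto simp: polar_wrt_def)
  qed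
  moreover have "finite {w. w extreme_point_of C}"
    using extreme \<open>finite S\<close> finite_subset by blast
  moreover have "0 \<in> C"
    by (simp add: C_def D_def polar_wrt_def)
  then have "{w. w extreme_point_of C} \<noteq> {}"
    using C_hull by force
  ultimately show ?thesis
    unfolding lattice_polytope_wrt_def D' by blast
qed

theorem corollary6p6:
  fixes P Q :: "(real^'n) set" and p :: "real^'n" and \<pi> :: "real^'n \<Rightarrow> real^'n"
  assumes "lattice_polytope_wrt int_points P"
    and "lattice_polytope_wrt int_points Q"
    and "\<exists>m. reflexive_wrt UNIV int_points (msum P Q) m"
    and "p \<in> P" and "p \<in> int_points"
    and "linear \<pi>"
    and "{x. \<pi> x = 0} = span {x - p | x. x \<in> P}"
  shows "\<exists>m. reflexive_wrt (range \<pi>) (\<pi> ` int_points) (\<pi> ` msum P Q) m"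
proof -
  obtain m where "reflexive_wrt UNIV int_points (msum P Q) m"
    using assms(3) by blast
  then have K: "lattice_polytope_wrt int_points (msum P Q)" and "m \<in> int_points"
    and ball: "\<exists>e>0. ball m e \<subseteq> msum P Q"
    and polar: "lattice_polytope_wrt (dual_lattice UNIV int_points) (polar_wrt UNIV (msum P Q) m)"
    by (auto simp: reflexive_wrt_def)
  have ker: "\<pi> -` {0} = span {x - p | x. x \<in> P}"
    using assms(7) by (simp add: vimage_def)
  have "reflexive_wrt (range \<pi>) (\<pi> ` int_points) (\<pi> ` msum P Q) (\<pi> m)"
    unfolding reflexive_wrt_def
    using lattice_polytope_wrt_linear_image[OF K assms(6)] \<open>m \<in> int_points\<close>
      ball linear_image_contains_ball_Int_range[OF assms(6)]
      lattice_polytope_polar_wrt_linear_image[OF compact_lattice_polytope[OF K] assms(4) polar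
        assms(6) ker]
    by blast
  then show ?thesis ..
qed

end
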